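(* Let $\mathcal{X}\subseteq\mathbb{R}^n$ be a compact set that is comonotone under a permutation mapping $\Psi:\Pi_n\to\Pi_n$. If $\Psi$ is surjective, then $\mathcal{X}$ is standard comonotone.
   Context: $\Pi_n$ is the set of permutations of $[n]$. For $\pi\in\Pi_n$, $\mathcal{Z}(\pi)=\{x\in\mathbb{R}^n: x_{\pi(1)}\ge\cdots\ge x_{\pi(n)}\}$. $\mathcal{X}$ is comonotone under $\Psi$ if for every $\pi\in\Pi_n$ and every $v\in\mathcal{Z}(\pi)$, whenever $\max_{x\in\mathcal{X}}v^\top x$ attains its optimum, it has an optimal solution $x^*\in\mathcal{Z}(\Psi(\pi))$. $\mathcal{X}$ is standard comonotone if it is comonotone under the identity mapping $\Psi(\pi)=\pi$. *)

theory Defs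
  imports "HOL-Analysis.Analysis"
begin

text \<open>Coordinates of R^n are indexed by a finite linearly ordered type 'n
  (isomorphic to {1..n} with its usual order); permutations of [n] are the
  functions that permute UNIV :: 'n set.\<close>

definition zone :: "('n::{finite,linorder} \<Rightarrow> 'n) \<Rightarrow> (real^'n::{finite,linorder}) set" where
  "zone \<pi> = {x. \<forall>i j. i \<le> j \<longrightarrow> x $ (\<pi> j) \<le> x $ (\<pi> i)}"

definition comonotone_under ::
  "(('n::{finite,linorder} \<Rightarrow> 'n) \<Rightarrow> ('n \<Rightarrow> 'n)) \<Rightarrow> (real^'n::{finite,linorder}) set \<Rightarrow> bool" where
  "comonotone_under \<Psi> X \<longleftrightarrow>
     (\<forall>\<pi>. \<pi> permutes UNIV \<longrightarrow> (\<forall>v \<in> zone \<pi>.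
        (\<exists>x\<in>X. \<forall>y\<in>X. v \<bullet> y \<le> v \<bullet> x) \<longrightarrow>
        (\<exists>x\<in>X. (\<forall>y\<in>X. v \<bullet> y \<le> v \<bullet> x) \<and> x \<in> zone (\<Psi> \<pi>))))"

definition standard_comonotone :: "(real^'n::{finite,linorder}) set \<Rightarrow> bool" where
  "standard_comonotone X \<longleftrightarrow> comonotone_under (\<lambda>\<pi>. \<pi>) X"

end

theory Submission
  imports Defs
begin

text \<open>Let \<open>v\<close> be sorted by \<open>\<pi>\<close>; for a permutation \<open>\<rho>\<close> let \<open>v\<^sub>\<rho>\<close> carry the same entries, sorted
  by \<open>\<rho>\<close>, and let \<open>h(\<rho>)\<close> be the support function of \<open>X\<close> at \<open>v\<^sub>\<rho>\<close>. Comonotonicity yields a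
  maximiser \<open>x\<close> of \<open>v\<^sub>\<rho>\<close> sorted by \<open>\<sigma> = \<Psi>(\<rho>)\<close>, and the rearrangement inequality gives
  \<open>h(\<rho>) = v\<^sub>\<rho> \<bullet> x \<le> v\<^sub>\<sigma> \<bullet> x \<le> h(\<sigma>)\<close>. Since \<open>\<Psi>\<close> permutes the finite set of permutations,
  summing over all \<open>\<rho>\<close> forces \<open>h(\<Psi>(\<rho>)) = h(\<rho>)\<close>. Choosing \<open>\<Psi>(\<rho>) = \<pi>\<close>, the maximiser \<open>x\<close>
  lies in the zone of \<open>\<pi>\<close> and \<open>h(\<pi>) = h(\<rho>) = v\<^sub>\<rho> \<bullet> x \<le> v \<bullet> x\<close>, so \<open>x\<close> maximises \<open>v\<close>.\<close>

lemma sum_mult_le_transpose_Max: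
  fixes s a :: "'a::linorder \<Rightarrow> real"
  assumes "finite A" "\<tau> permutes A" "antimono_on A s" "antimono_on A a"
    and "m \<in> A" "\<forall>i\<in>A. i \<le> m"
  shows "(\<Sum>i\<in>A. s i * a (\<tau> i)) \<le> (\<Sum>i\<in>A. s i * a ((Transposition.transpose m (\<tau> m) \<circ> \<tau>) i))"
    (is "_ \<le> (\<Sum>i\<in>A. s i * a (?\<tau>' i))")
proof -
  define j where "j = inv \<tau> m"
  have j: "j \<in> A" "\<tau> j = m"
    unfolding j_def using assms(2,5)
    by (metis permutes_in_image permutes_inv, simp add: permutes_inverses(1))
  have \<tau>m: "\<tau> m \<in> A" using assms(2,5) by (simp add: permutes_in_image)
  show ?thesis
  proof (cases "j = m")
    case True
    then show ?thesis using j by simp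
  next
    case False
    have split: "(\<Sum>i\<in>A. f i) = f j + f m + (\<Sum>i\<in>A - {m} - {j}. f i)" for f :: "'a \<Rightarrow> real"
      using assms(1,5) j(1) False by (simp add: sum.remove insert_Diff_if)
    have same: "?\<tau>' i = \<tau> i" if "i \<in> A - {m} - {j}" for i
    proof -
      have "\<tau> i \<noteq> \<tau> j" "\<tau> i \<noteq> \<tau> m"
        using that permutes_inj[OF assms(2)] by (auto dest: injD)
      then show ?thesis using j by simp
    qed
    have "s m \<le> s j" "a m \<le> a (\<tau> m)"
      using monotone_onD[OF assms(3) j(1) assms(5)] monotone_onD[OF assms(4) \<tau>m assms(5)]
        assms(6) j(1) \<tau>m by simp_all
    then have "0 \<le> (s j - s m) * (a (\<tau> m) - a m)" by simp
    then have gain: "s j * a m + s m * a (\<tau> m) \<le> s j * a (\<tau> m) + s m * a m"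
      by (simp add: algebra_simps)
    have "(\<Sum>i\<in>A. s i * a (\<tau> i)) = s j * a m + s m * a (\<tau> m) + (\<Sum>i\<in>A - {m} - {j}. s i * a (\<tau> i))"
      using split j(2) by simp
    also have "\<dots> \<le> s j * a (\<tau> m) + s m * a m + (\<Sum>i\<in>A - {m} - {j}. s i * a (?\<tau>' i))"
      using gain same by simp
    also have "\<dots> = (\<Sum>i\<in>A. s i * a (?\<tau>' i))"
      using split j(2) by simp
    finally show ?thesis .
  qed
qed

lemma sum_mult_permutes_le:
  fixes s a :: "'a::linorder \<Rightarrow> real"
  assumes "finite A" "\<tau> permutes A" "antimono_on A s" "antimono_on A a"
  shows "(\<Sum>i\<in>A. s i * a (\<tau> i)) \<le> (\<Sum>i\<in>A. s i * a i)"
  using assms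
proof (induction A arbitrary: \<tau> rule: finite_linorder_max_induct)
  case empty
  then show ?case by simp
next
  case (insert m A)
  define \<tau>' where "\<tau>' = Transposition.transpose m (\<tau> m) \<circ> \<tau>"
  have "m \<notin> A" using insert.hyps(2) by blast
  have "\<tau>' permutes A" unfolding \<tau>'_def using insert.prems(1) by (rule permutes_insert_lemma)
  then have "(\<Sum>i\<in>A. s i * a (\<tau>' i)) \<le> (\<Sum>i\<in>A. s i * a i)"
    using insert.IH insert.prems(2,3) by (meson monotone_on_subset subset_insertI)
  moreover have "\<tau>' m = m" unfolding \<tau>'_def by simp
  moreover have "(\<Sum>i\<in>insert m A. s i * a (\<tau> i)) \<le> (\<Sum>i\<in>insert m A. s i * a (\<tau>' i))"
    unfolding \<tau>'_def using insert by (intro sum_mult_le_transpose_Max) auto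
  ultimately show ?case
    using insert.hyps(1) \<open>m \<notin> A\<close> by simp
qed

lemma le_comp_surj_on_finite_imp_eq:
  fixes g :: "'a \<Rightarrow> 'b::ordered_cancel_comm_monoid_add"
  assumes "finite P" "f ` P = P" "\<And>p. p \<in> P \<Longrightarrow> g p \<le> g (f p)" "p \<in> P"
  shows "g (f p) = g p"
proof (rule ccontr)
  assume "g (f p) \<noteq> g p"
  with assms(3,4) have "g p < g (f p)" by (simp add: order_less_le)
  with assms have "sum g P < sum (g \<circ> f) P"
    by (intro sum_strict_mono_ex1) auto
  moreover have "inj_on f P"
    using assms(1,2) by (simp add: eq_card_imp_inj_on)
  then have "sum (g \<circ> f) P = sum g P"
    using sum.reindex[of f P g] assms(2) by simp
  ultimately show False by simp
qed

definition support_fun :: "'a::real_inner set \<Rightarrow> 'a \<Rightarrow> real" where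
  "support_fun X w = (SUP y\<in>X. w \<bullet> y)"

lemma inner_le_support_fun:
  assumes "compact X" "y \<in> X"
  shows "w \<bullet> y \<le> support_fun X w"
proof -
  have "bdd_above ((\<bullet>) w ` X)"
    using assms(1) by (intro bounded_imp_bdd_above compact_imp_bounded compact_continuous_image
      continuous_intros)
  then show ?thesis
    unfolding support_fun_def by (rule cSUP_upper[OF assms(2)])
qed

lemma support_fun_eq_inner:
  assumes "x \<in> X" "\<forall>y\<in>X. w \<bullet> y \<le> w \<bullet> x"
  shows "support_fun X w = w \<bullet> x"
  unfolding support_fun_def using assms by (intro cSup_eq_maximum) auto

definition arrange :: "('n::{finite,linorder} \<Rightarrow> real) \<Rightarrow> ('n \<Rightarrow> 'n) \<Rightarrow> real^'n::{finite,linorder}" where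
  "arrange s \<pi> = (\<chi> k. s (inv \<pi> k))"

lemma arrange_nth_permutes:
  "\<pi> permutes UNIV \<Longrightarrow> arrange s \<pi> $ \<pi> i = s i"
  by (simp add: arrange_def permutes_inverses(2))

lemma arrange_in_zone:
  "antimono s \<Longrightarrow> \<pi> permutes UNIV \<Longrightarrow> arrange s \<pi> \<in> zone \<pi>"
  by (simp add: zone_def arrange_nth_permutes antimonoD)

lemma antimono_zone_nth:
  "v \<in> zone \<pi> \<Longrightarrow> antimono (\<lambda>i. v $ \<pi> i)"
  by (auto simp: zone_def intro: antimonoI)

lemma arrange_zone_nth:
  "\<pi> permutes UNIV \<Longrightarrow> arrange (\<lambda>i. v $ \<pi> i) \<pi> = v"
  by (simp add: arrange_def vec_eq_iff permutes_inverses(1))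

lemma inner_arrange:
  assumes "\<pi> permutes UNIV"
  shows "arrange s \<pi> \<bullet> x = (\<Sum>i\<in>UNIV. s i * x $ \<pi> i)"
proof -
  have "arrange s \<pi> \<bullet> x = (\<Sum>k\<in>UNIV. s (inv \<pi> k) * x $ k)"
    by (simp add: arrange_def inner_vec_def)
  also have "\<dots> = (\<Sum>i\<in>UNIV. s (inv \<pi> (\<pi> i)) * x $ \<pi> i)"
    using sum.permute[OF assms] by simp
  finally show ?thesis
    using assms by (simp add: permutes_inverses(2))
qed

lemma inner_arrange_le:
  assumes "antimono s" "\<pi> permutes UNIV" "\<sigma> permutes UNIV" "x \<in> zone \<sigma>"
  shows "arrange s \<pi> \<bullet> x \<le> arrange s \<sigma> \<bullet> x"
proof -
  define a where "a i = x $ \<sigma> i" for i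
  have "(inv \<sigma> \<circ> \<pi>) permutes UNIV"
    using assms(2,3) by (simp add: permutes_compose permutes_inv)
  moreover have "antimono_on UNIV s" "antimono_on UNIV a"
    using assms(1) antimono_zone_nth[OF assms(4)] unfolding a_def by simp_all
  ultimately have "(\<Sum>i\<in>UNIV. s i * a ((inv \<sigma> \<circ> \<pi>) i)) \<le> (\<Sum>i\<in>UNIV. s i * a i)"
    by (rule sum_mult_permutes_le[OF finite_class.finite_UNIV])
  then show ?thesis
    using assms(3) unfolding inner_arrange[OF assms(2)] inner_arrange[OF assms(3)] a_def
    by (simp add: permutes_inverses(1))
qed

lemma comonotone_under_maximizer:
  assumes "comonotone_under \<Psi> X" "compact X" "X \<noteq> {}" "\<pi> permutes UNIV" "w \<in> zone \<pi>"
  obtains x where "x \<in> X" "\<forall>y\<in>X. w \<bullet> y \<le> w \<bullet> x" "x \<in> zone (\<Psi> \<pi>)"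
proof -
  have "\<exists>x\<in>X. \<forall>y\<in>X. w \<bullet> y \<le> w \<bullet> x"
    using assms(2,3) by (rule continuous_attains_sup) (intro continuous_intros)
  then show ?thesis
    using assms(1,4,5) that unfolding comonotone_under_def by blast
qed

lemma support_fun_arrange_le_comonotone:
  assumes "comonotone_under \<Psi> X" "compact X" "X \<noteq> {}" "antimono s"
    and "\<pi> permutes UNIV" "\<Psi> \<pi> permutes UNIV"
  shows "support_fun X (arrange s \<pi>) \<le> support_fun X (arrange s (\<Psi> \<pi>))"
proof -
  obtain x where x: "x \<in> X" "\<forall>y\<in>X. arrange s \<pi> \<bullet> y \<le> arrange s \<pi> \<bullet> x" "x \<in> zone (\<Psi> \<pi>)"
    using comonotone_under_maximizer[OF assms(1-3,5) arrange_in_zone[OF assms(4,5)]] .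
  have "support_fun X (arrange s \<pi>) = arrange s \<pi> \<bullet> x"
    using x(1,2) by (rule support_fun_eq_inner)
  also have "\<dots> \<le> arrange s (\<Psi> \<pi>) \<bullet> x"
    using assms(4-6) x(3) by (rule inner_arrange_le)
  also have "\<dots> \<le> support_fun X (arrange s (\<Psi> \<pi>))"
    using assms(2) x(1) by (rule inner_le_support_fun)
  finally show ?thesis .
qed

lemma support_fun_arrange_comonotone_eq:
  assumes "comonotone_under \<Psi> X" "compact X" "X \<noteq> {}" "antimono s"
    and "\<forall>\<pi>. \<pi> permutes UNIV \<longrightarrow> \<Psi> \<pi> permutes UNIV"
    and "\<forall>\<sigma>. \<sigma> permutes UNIV \<longrightarrow> (\<exists>\<pi>. \<pi> permutes UNIV \<and> \<Psi> \<pi> = \<sigma>)"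
    and "\<rho> permutes UNIV"
  shows "support_fun X (arrange s (\<Psi> \<rho>)) = support_fun X (arrange s \<rho>)"
proof -
  have onto: "\<Psi> ` {\<pi>. \<pi> permutes UNIV} = {\<pi>. \<pi> permutes UNIV}"
  proof (intro equalityI subsetI)
    show "\<sigma> \<in> \<Psi> ` {\<pi>. \<pi> permutes UNIV}" if "\<sigma> \<in> {\<pi>. \<pi> permutes UNIV}" for \<sigma>
      using assms(6) that by (auto simp: image_iff)
  qed (use assms(5) in auto)
  have le: "support_fun X (arrange s \<pi>) \<le> support_fun X (arrange s (\<Psi> \<pi>))"
    if "\<pi> \<in> {\<pi>. \<pi> permutes UNIV}" for \<pi>
    using that assms(5) support_fun_arrange_le_comonotone[OF assms(1-4)] by simp
  show ?thesis
    using le_comp_surj_on_finite_imp_eq[where g = "\<lambda>\<pi>. support_fun X (arrange s \<pi>)",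
        OF finite_permutations[OF finite_class.finite_UNIV] onto le] assms(7)
    by simp
qed

theorem theorem1:
  fixes X :: "(real^'n::{finite,linorder}) set"
    and \<Psi> :: "('n \<Rightarrow> 'n) \<Rightarrow> ('n \<Rightarrow> 'n)"
  assumes "compact X"
    and "\<forall>\<pi>. \<pi> permutes (UNIV :: 'n set) \<longrightarrow> \<Psi> \<pi> permutes (UNIV :: 'n set)"
    and "comonotone_under \<Psi> X"
    and "\<forall>\<sigma>. \<sigma> permutes (UNIV :: 'n set) \<longrightarrow>
           (\<exists>\<pi>. \<pi> permutes (UNIV :: 'n set) \<and> \<Psi> \<pi> = \<sigma>)"
  shows "standard_comonotone X"
  unfolding standard_comonotone_def comonotone_under_def
proof (intro allI impI ballI)
  fix \<pi> v
  assume \<pi>: "\<pi> permutes UNIV" and v: "v \<in> zone \<pi>" and "\<exists>x\<in>X. \<forall>y\<in>X. v \<bullet> y \<le> v \<bullet> x"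
  then have "X \<noteq> {}" by blast
  define s where "s i = v $ \<pi> i" for i
  have s: "antimono s" and v_eq: "arrange s \<pi> = v"
    unfolding s_def using antimono_zone_nth[OF v] arrange_zone_nth[OF \<pi>] by simp_all
  obtain \<rho> where \<rho>: "\<rho> permutes UNIV" "\<Psi> \<rho> = \<pi>"
    using assms(4) \<pi> by blast
  obtain x where x: "x \<in> X" "\<forall>y\<in>X. arrange s \<rho> \<bullet> y \<le> arrange s \<rho> \<bullet> x" "x \<in> zone \<pi>"
    using comonotone_under_maximizer[OF assms(3,1) \<open>X \<noteq> {}\<close> \<rho>(1) arrange_in_zone[OF s \<rho>(1)],
      unfolded \<rho>(2)] .
  let ?h = "\<lambda>\<rho>. support_fun X (arrange s \<rho>)"
  have "v \<bullet> y \<le> v \<bullet> x" if "y \<in> X" for y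
  proof -
    have "v \<bullet> y \<le> ?h \<pi>" using inner_le_support_fun[OF assms(1) that] v_eq by simp
    also have "\<dots> = ?h \<rho>"
      using support_fun_arrange_comonotone_eq[OF assms(3,1) \<open>X \<noteq> {}\<close> s assms(2,4) \<rho>(1)] \<rho>(2)
      by simp
    also have "\<dots> = arrange s \<rho> \<bullet> x" using x(1,2) by (rule support_fun_eq_inner)
    also have "\<dots> \<le> v \<bullet> x" using inner_arrange_le[OF s \<rho>(1) \<pi> x(3)] v_eq by simp
    finally show ?thesis .
  qed
  with x show "\<exists>x\<in>X. (\<forall>y\<in>X. v \<bullet> y \<le> v \<bullet> x) \<and> x \<in> zone \<pi>" by blast
qed

end
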